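(* Let $n=|\mathcal A|=|\mathcal T|$ and $W=[w_{ij}]\in\mathbb{R}^{n\times n}$. Define $f(\alpha)=\sum_{i=1}^n f_i(\alpha_i)$ where $\alpha_i\in\mathbb{R}^n$ is the $i$-th row of $\alpha$, $f_i(\alpha_i)=-w_i^{\mathrm T}\alpha_i$ if $\mathbf 1^{\mathrm T}\alpha_i=1$ and $0\le\alpha_i\le 1$, and $f_i(\alpha_i)=+\infty$ otherwise ($w_i$ the $i$-th row of $W$); and let $g(z)=0$ if every column of $z$ sums to $1$ and $g(z)=+\infty$ otherwise. Consider $\min f(\alpha)+g(z)$ subject to $\alpha=z$. Fix $\rho>0$ and $\tau\in(0,1)$, initial $z^0,u^0\in\mathbb{R}^{n\times n}$, and iterate $$\alpha^{k+1}=\arg\min_\alpha f(\alpha)+\tfrac{\rho}{2}\|\alpha-z^k+u^k\|_F^2,$$ $$z^{k+1}=\arg\min_z g(z)+\tfrac{\rho}{2\tau}\big\|z-\big(z^k+\tau(\alpha^{k+1}-z^k+u^k)\big)\big\|_F^2,$$ $$u^{k+1}=u^k+\alpha^{k+1}-z^{k+1}.$$ Then $z^k$ converges to an optimal solution $z^\*$ of the problem (and $\alpha^k-z^k\to 0$).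
   Context: $\mathbf 1$ is the all-ones vector; inequalities between vectors are entrywise. The $z$-update is a single projected-gradient (linearized proximal) step on the augmented Lagrangian $\sum_i f_i(\alpha_i)+g(z)+\tfrac{\rho}{2}\|\alpha-z+u\|^2$ in place of the exact ADMM $z$-minimization; $u$ is the scaled dual variable. *)

theory Defs
  imports "HOL-Analysis.Analysis" "HOL-Library.Extended_Real"
begin

text \<open>Matrices in R^{n x n} are modelled as real^'n^'n ('n a finite index type, n = CARD('n)).
  Row i of x is x $ i, entry (i,j) is x $ i $ j. The norm on real^'n^'n is the Frobenius norm.\<close>

definition fi :: "real^'n \<Rightarrow> real^'n \<Rightarrow> ereal" where
  "fi wi ai = (if (\<Sum>j\<in>UNIV. ai $ j) = 1 \<and> (\<forall>j. 0 \<le> ai $ j \<and> ai $ j \<le> 1)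
               then ereal (- (wi \<bullet> ai)) else \<infinity>)"

definition fobj :: "real^'n^'n \<Rightarrow> real^'n^'n \<Rightarrow> ereal" where
  "fobj W a = (\<Sum>i\<in>UNIV. fi (W $ i) (a $ i))"

definition gobj :: "real^'n^'n \<Rightarrow> ereal" where
  "gobj z = (if (\<forall>j. (\<Sum>i\<in>UNIV. z $ i $ j) = 1) then 0 else \<infinity>)"

end

(* If (x, rho w) is a KKT pair of the linear program  max W.x  over row-stochastic matrices with
   unit column sums, the quantity  |u_k - w|^2/2 + |z_k - x|^2/(2 tau)  drops in each step by at
   least  |alpha_(k+1) - z_k|^2/2 + (1 - tau)/(2 tau) |z_(k+1) - z_k|^2, which is nonnegative as
   tau < 1. So the iterates are bounded and successive differences vanish; every cluster point
   of (z_k, u_k) is again a KKT pair, and measuring the same quantity against it shows that the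
   whole sequence converges. A KKT pair exists by LP duality, derived from Farkas' lemma for
   finitely generated cones. *)

theory Submission
  imports Defs
begin

lemma tendsto_zero_if_norm_sq_le:
  fixes f :: "nat \<Rightarrow> 'a::real_normed_vector"
  assumes "C \<ge> 0" and "\<And>k. (norm (f k))\<^sup>2 \<le> C * g k" and "g \<longlonglongrightarrow> 0"
  shows "f \<longlonglongrightarrow> 0"
proof (rule Lim_null_comparison)
  show "\<forall>\<^sub>F k in sequentially. norm (f k) \<le> sqrt (C * g k)"
    using assms(2) by (intro always_eventually allI) (simp add: real_le_rsqrt)
  have "(\<lambda>k. sqrt (C * g k)) \<longlonglongrightarrow> sqrt (C * 0)"
    by (intro tendsto_intros assms(3))
  then show "(\<lambda>k. sqrt (C * g k)) \<longlonglongrightarrow> 0" by simp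
qed

lemma decseq_tendsto_if_subseq_tendsto:
  fixes f :: "nat \<Rightarrow> real"
  assumes "decseq f" and "\<And>k. L \<le> f k" and "strict_mono r" and "(f \<circ> r) \<longlonglongrightarrow> L"
  shows "f \<longlonglongrightarrow> L"
proof -
  obtain L' where "f \<longlonglongrightarrow> L'"
    using decseq_convergent[OF assms(1), of L] assms(2) by blast
  moreover from this have "(f \<circ> r) \<longlonglongrightarrow> L'"
    using LIMSEQ_subseq_LIMSEQ assms(3) by blast
  ultimately show ?thesis
    using assms(4) LIMSEQ_unique by blast
qed

lemma convex_quadratic_min_imp_variational_ineq:
  fixes c x v a :: "'a::real_inner"
  assumes "convex S" "x \<in> S" "a \<in> S" "r \<ge> 0"
    and min: "\<And>y. y \<in> S \<Longrightarrow>
      c \<bullet> x + r/2 * (norm (x - v))\<^sup>2 \<le> c \<bullet> y + r/2 * (norm (y - v))\<^sup>2"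
  shows "0 \<le> (c + r *\<^sub>R (x - v)) \<bullet> (a - x)"
proof -
  define L where "L = (c + r *\<^sub>R (x - v)) \<bullet> (a - x)"
  define N where "N = (norm (a - x))\<^sup>2"
  have "- (r/2 * N) * t \<le> L" if t: "0 < t" "t \<le> 1" for t
  proof -
    have "x + t *\<^sub>R (a - x) \<in> S"
      using convexD_alt[OF assms(1,2,3), of t] t by (simp add: algebra_simps)
    moreover have "c \<bullet> (x + t *\<^sub>R (a - x)) + r/2 * (norm (x + t *\<^sub>R (a - x) - v))\<^sup>2
        = c \<bullet> x + r/2 * (norm (x - v))\<^sup>2 + t * (L + r/2 * t * N)"
      unfolding L_def N_def power2_norm_eq_inner
      by (simp add: inner_simps field_simps inner_commute power2_eq_square)
    ultimately have "0 \<le> t * (L + r/2 * t * N)"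
      using min by fastforce
    then have "0 \<le> L + r/2 * t * N"
      using t by (simp add: zero_le_mult_iff)
    then show ?thesis by (simp add: algebra_simps)
  qed
  then have "\<forall>\<^sub>F t in at_right (0::real). - (r/2 * N) * t \<le> L"
    using eventually_at_right_real[of 0 1] by (auto elim: eventually_mono)
  moreover have "((\<lambda>t. - (r/2 * N) * t) \<longlongrightarrow> - (r/2 * N) * 0) (at_right (0::real))"
    by (intro tendsto_intros)
  ultimately have "- (r/2 * N) * 0 \<le> L"
    using tendsto_le[OF trivial_limit_at_right_real tendsto_const] by blast
  then show ?thesis by (simp add: L_def)
qed

lemma farkas_convex_cone_hull:
  fixes G :: "'a::euclidean_space set"
  assumes "finite G" and "w \<notin> convex_cone hull G"
  obtains d where "w \<bullet> d > 0" and "\<And>g. g \<in> G \<Longrightarrow> g \<bullet> d \<le> 0"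
proof -
  obtain a b where ab: "a \<bullet> w < b" "\<And>x. x \<in> convex_cone hull G \<Longrightarrow> b < a \<bullet> x"
    using separating_hyperplane_closed_point[OF convex_convex_cone_hull
        closed_convex_cone_hull[OF assms(1)] assms(2)] by blast
  have "b < 0"
    using ab(2)[OF convex_cone_hull_contains_0] by simp
  have "0 \<le> a \<bullet> g" if "g \<in> G" for g
  proof (rule ccontr)
    assume "\<not> 0 \<le> a \<bullet> g"
    \<comment> \<open>the cone contains a positive multiple of g on which a equals b\<close>
    then have "(b / (a \<bullet> g)) *\<^sub>R g \<in> convex_cone hull G"
      using \<open>b < 0\<close> that by (intro convex_cone_hull_mul hull_inc) (auto simp: divide_nonpos_neg)
    then have "b < a \<bullet> ((b / (a \<bullet> g)) *\<^sub>R g)" by (rule ab(2))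
    then show False using \<open>\<not> 0 \<le> a \<bullet> g\<close> by simp
  qed
  then show ?thesis
    using that[of "- a"] ab(1) \<open>b < 0\<close> by (simp add: inner_commute)
qed

lemma lyapunov_descent_inequality:
  fixes c x z z' u a w :: "'a::real_inner"
  assumes rho: "\<rho> > 0" and tau: "\<tau> > 0"
    and alpha_vi: "0 \<le> (\<rho> *\<^sub>R (a - z + u) - c) \<bullet> (x - a)"
    and z_vi: "0 \<le> (z' - (z + \<tau> *\<^sub>R (a - z + u))) \<bullet> (x - z')"
    and kkt_F: "0 \<le> (\<rho> *\<^sub>R w - c) \<bullet> (a - x)"
    and kkt_A: "(\<rho> *\<^sub>R w) \<bullet> (z' - x) \<le> 0"
  shows "(norm (u + a - z' - w))\<^sup>2 / 2 + (norm (z' - x))\<^sup>2 / (2*\<tau>)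
         + (norm (a - z))\<^sup>2 / 2 + (1 - \<tau>) / (2*\<tau>) * (norm (z' - z))\<^sup>2
       \<le> (norm (u - w))\<^sup>2 / 2 + (norm (z - x))\<^sup>2 / (2*\<tau>)"
proof -
  define S where "S = (\<rho> *\<^sub>R (a - z + u) - c) \<bullet> (x - a) + (\<rho> *\<^sub>R w - c) \<bullet> (a - x)
    + (\<rho>/\<tau>) * ((z' - (z + \<tau> *\<^sub>R (a - z + u))) \<bullet> (x - z')) - (\<rho> *\<^sub>R w) \<bullet> (z' - x)"
  have "0 \<le> (\<rho>/\<tau>) * ((z' - (z + \<tau> *\<^sub>R (a - z + u))) \<bullet> (x - z'))"
    using z_vi rho tau by simp
  then have "0 \<le> S / \<rho>"
    using alpha_vi kkt_F kkt_A rho unfolding S_def by simp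
  moreover have "(norm (u - w))\<^sup>2 / 2 + (norm (z - x))\<^sup>2 / (2*\<tau>)
     - ((norm (u + a - z' - w))\<^sup>2 / 2 + (norm (z' - x))\<^sup>2 / (2*\<tau>)
         + (norm (a - z))\<^sup>2 / 2 + (1 - \<tau>) / (2*\<tau>) * (norm (z' - z))\<^sup>2) = S / \<rho>"
    using rho tau unfolding S_def
    by (simp add: power2_norm_eq_inner inner_simps field_simps inner_commute)
  ultimately show ?thesis by linarith
qed

(* KKT pairs of  min -c.alpha + i_F(alpha) + i_A(z)  subject to  alpha = z  (i_S the indicator
   of S), with y the multiplier of the coupling constraint. *)
definition kkt_pair :: "'a set \<Rightarrow> 'a set \<Rightarrow> 'a \<Rightarrow> 'a \<Rightarrow> 'a::real_inner \<Rightarrow> bool" where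
  "kkt_pair F A c x y \<longleftrightarrow> x \<in> F \<and> x \<in> A
     \<and> (\<forall>a\<in>F. 0 \<le> (y - c) \<bullet> (a - x)) \<and> (\<forall>b\<in>A. y \<bullet> (b - x) \<le> 0)"

lemma kkt_pair_maximizes:
  assumes "kkt_pair F A c x y" and "a \<in> F" and "a \<in> A"
  shows "c \<bullet> a \<le> c \<bullet> x"
proof -
  have "0 \<le> (y - c) \<bullet> (a - x)" and "y \<bullet> (a - x) \<le> 0"
    using assms unfolding kkt_pair_def by auto
  then have "c \<bullet> (a - x) \<le> 0"
    by (simp add: inner_diff_left)
  then show ?thesis
    by (simp add: inner_diff_right)
qed

(* The two subproblems enter only through their variational inequalities; u is the scaled
   multiplier, so KKT pairs are compared with the iterates in the form (x, rho w). *)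
locale linearized_admm =
  fixes F A :: "'a::euclidean_space set" and c :: 'a and \<rho> \<tau> :: real
    and \<alpha> z u :: "nat \<Rightarrow> 'a"
  assumes rho_pos: "0 < \<rho>" and tau_pos: "0 < \<tau>" and tau_less_1: "\<tau> < 1"
    and closed_F: "closed F" and closed_A: "closed A"
    and alpha_in_F: "\<alpha> (Suc k) \<in> F" and z_in_A: "z (Suc k) \<in> A"
    and alpha_vi: "a \<in> F \<Longrightarrow> 0 \<le> (\<rho> *\<^sub>R (\<alpha> (Suc k) - z k + u k) - c) \<bullet> (a - \<alpha> (Suc k))"
    and z_vi: "b \<in> A \<Longrightarrow>
      0 \<le> (z (Suc k) - (z k + \<tau> *\<^sub>R (\<alpha> (Suc k) - z k + u k))) \<bullet> (b - z (Suc k))"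
    and u_step: "u (Suc k) = u k + \<alpha> (Suc k) - z (Suc k)"
begin

definition lyapunov :: "'a \<Rightarrow> 'a \<Rightarrow> nat \<Rightarrow> real" where
  "lyapunov x w k = (norm (u k - w))\<^sup>2 / 2 + (norm (z k - x))\<^sup>2 / (2*\<tau>)"

definition residual :: "nat \<Rightarrow> real" where
  "residual k = (norm (\<alpha> (Suc k) - z k))\<^sup>2 / 2 + (1 - \<tau>) / (2*\<tau>) * (norm (z (Suc k) - z k))\<^sup>2"

lemma lyapunov_nonneg: "0 \<le> lyapunov x w k"
  using tau_pos unfolding lyapunov_def by simp

lemma residual_nonneg: "0 \<le> residual k"
  using tau_pos tau_less_1 unfolding residual_def by simp

lemma lyapunov_descent:
  assumes "kkt_pair F A c x (\<rho> *\<^sub>R w)"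
  shows "lyapunov x w (Suc k) + residual k \<le> lyapunov x w k"
proof -
  have "x \<in> F" "x \<in> A"
    using assms unfolding kkt_pair_def by auto
  have "(norm (u k + \<alpha> (Suc k) - z (Suc k) - w))\<^sup>2 / 2 + (norm (z (Suc k) - x))\<^sup>2 / (2*\<tau>)
      + (norm (\<alpha> (Suc k) - z k))\<^sup>2 / 2 + (1 - \<tau>) / (2*\<tau>) * (norm (z (Suc k) - z k))\<^sup>2
    \<le> (norm (u k - w))\<^sup>2 / 2 + (norm (z k - x))\<^sup>2 / (2*\<tau>)"
  proof (rule lyapunov_descent_inequality[OF rho_pos tau_pos])
    show "0 \<le> (\<rho> *\<^sub>R (\<alpha> (Suc k) - z k + u k) - c) \<bullet> (x - \<alpha> (Suc k))"
      using alpha_vi[OF \<open>x \<in> F\<close>] .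
    show "0 \<le> (z (Suc k) - (z k + \<tau> *\<^sub>R (\<alpha> (Suc k) - z k + u k))) \<bullet> (x - z (Suc k))"
      using z_vi[OF \<open>x \<in> A\<close>] .
    show "0 \<le> (\<rho> *\<^sub>R w - c) \<bullet> (\<alpha> (Suc k) - x)" "(\<rho> *\<^sub>R w) \<bullet> (z (Suc k) - x) \<le> 0"
      using assms alpha_in_F z_in_A unfolding kkt_pair_def by auto
  qed
  then show ?thesis
    unfolding lyapunov_def residual_def u_step by linarith
qed

lemma decseq_lyapunov:
  assumes "kkt_pair F A c x (\<rho> *\<^sub>R w)"
  shows "decseq (lyapunov x w)"
proof (rule decseq_SucI)
  show "lyapunov x w (Suc k) \<le> lyapunov x w k" for k
    using lyapunov_descent[OF assms, of k] residual_nonneg[of k] by linarith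
qed

lemma summable_residual:
  assumes "kkt_pair F A c x (\<rho> *\<^sub>R w)"
  shows "summable residual"
proof (rule summableI_nonneg_bounded[OF residual_nonneg])
  fix n
  have "(\<Sum>k<n. residual k) \<le> (\<Sum>k<n. lyapunov x w k - lyapunov x w (Suc k))"
  proof (rule sum_mono)
    show "residual k \<le> lyapunov x w k - lyapunov x w (Suc k)" for k
      using lyapunov_descent[OF assms, of k] by linarith
  qed
  also have "\<dots> = lyapunov x w 0 - lyapunov x w n"
    by (rule sum_lessThan_telescope')
  also have "\<dots> \<le> lyapunov x w 0"
    using lyapunov_nonneg by simp
  finally show "(\<Sum>k<n. residual k) \<le> lyapunov x w 0" .
qed

lemma successive_differences_tendsto_zero:
  assumes "kkt_pair F A c x (\<rho> *\<^sub>R w)"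
  shows "(\<lambda>k. \<alpha> (Suc k) - z k) \<longlonglongrightarrow> 0" and "(\<lambda>k. z (Suc k) - z k) \<longlonglongrightarrow> 0"
proof -
  have residual_0: "residual \<longlonglongrightarrow> 0"
    using summable_LIMSEQ_zero[OF summable_residual[OF assms]] .
  show "(\<lambda>k. \<alpha> (Suc k) - z k) \<longlonglongrightarrow> 0"
    by (rule tendsto_zero_if_norm_sq_le[of 2 _ residual, OF _ _ residual_0])
      (use tau_pos tau_less_1 in \<open>auto simp: residual_def\<close>)
  show "(\<lambda>k. z (Suc k) - z k) \<longlonglongrightarrow> 0"
    by (rule tendsto_zero_if_norm_sq_le[of "2*\<tau>/(1-\<tau>)" _ residual, OF _ _ residual_0])
      (use tau_pos tau_less_1 in \<open>auto simp: residual_def field_simps\<close>)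
qed

lemma norm_sq_le_lyapunov:
  "(norm (z k - x))\<^sup>2 \<le> 2*\<tau> * lyapunov x w k" "(norm (u k - w))\<^sup>2 \<le> 2 * lyapunov x w k"
  using tau_pos unfolding lyapunov_def by (simp_all add: field_simps)

lemma bounded_iterates:
  assumes "kkt_pair F A c x (\<rho> *\<^sub>R w)"
  shows "bounded (range z)" and "bounded (range u)"
proof -
  have "lyapunov x w k \<le> lyapunov x w 0" for k
    using decseq_lyapunov[OF assms] by (simp add: decseq_def)
  then have "2*\<tau> * lyapunov x w k \<le> 2*\<tau> * lyapunov x w 0" "2 * lyapunov x w k \<le> 2 * lyapunov x w 0" for k
    using tau_pos by simp_all
  then have "(norm (z k - x))\<^sup>2 \<le> 2*\<tau> * lyapunov x w 0" "(norm (u k - w))\<^sup>2 \<le> 2 * lyapunov x w 0" for k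
    using norm_sq_le_lyapunov[where k = k and x = x and w = w] by (meson order_trans)+
  then have "norm (z k - x) \<le> sqrt (2*\<tau> * lyapunov x w 0)" "norm (u k - w) \<le> sqrt (2 * lyapunov x w 0)" for k
    by (simp_all add: real_le_rsqrt)
  then have "range z \<subseteq> cball x (sqrt (2*\<tau> * lyapunov x w 0))" "range u \<subseteq> cball w (sqrt (2 * lyapunov x w 0))"
    by (auto simp: dist_norm norm_minus_commute)
  then show "bounded (range z)" "bounded (range u)"
    using bounded_cball bounded_subset by blast+
qed

lemma primal_residual_tendsto_zero:
  assumes "kkt_pair F A c x (\<rho> *\<^sub>R w)"
  shows "(\<lambda>k. \<alpha> k - z k) \<longlonglongrightarrow> 0"
proof (rule LIMSEQ_imp_Suc)
  have "(\<lambda>k. (\<alpha> (Suc k) - z k) - (z (Suc k) - z k)) \<longlonglongrightarrow> 0 - 0"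
    by (rule tendsto_diff[OF successive_differences_tendsto_zero[OF assms]])
  then show "(\<lambda>k. \<alpha> (Suc k) - z (Suc k)) \<longlonglongrightarrow> 0"
    by simp
qed

lemma cluster_point_kkt_pair:
  assumes primal: "(\<lambda>k. \<alpha> k - z k) \<longlonglongrightarrow> 0" and steps: "(\<lambda>k. z (Suc k) - z k) \<longlonglongrightarrow> 0"
    and r: "strict_mono r"
    and z_lim: "(\<lambda>m. z (Suc (r m))) \<longlonglongrightarrow> x" and u_lim: "(\<lambda>m. u (Suc (r m))) \<longlonglongrightarrow> w"
  shows "kkt_pair F A c x (\<rho> *\<^sub>R w)"
proof -
  have subseq: "(\<lambda>m. f (Suc (r m))) \<longlonglongrightarrow> l" if "f \<longlonglongrightarrow> l" for f :: "nat \<Rightarrow> 'a" and l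
    using LIMSEQ_subseq_LIMSEQ[OF LIMSEQ_Suc[OF that] r] by (simp add: comp_def)
  have step_lim: "(\<lambda>m. z (Suc (r m)) - z (r m)) \<longlonglongrightarrow> 0"
    using LIMSEQ_subseq_LIMSEQ[OF steps r] by (simp add: comp_def)
  have alpha_lim: "(\<lambda>m. \<alpha> (Suc (r m))) \<longlonglongrightarrow> x"
    using tendsto_add[OF subseq[OF primal] z_lim] by simp
  have dual_shift: "\<alpha> (Suc k) - z k + u k = u (Suc k) + (z (Suc k) - z k)" for k
    by (simp add: u_step algebra_simps)
  have "x \<in> F"
    using closed_sequentially[OF closed_F _ alpha_lim] alpha_in_F by blast
  moreover have "x \<in> A"
    using closed_sequentially[OF closed_A _ z_lim] z_in_A by blast
  moreover have "0 \<le> (\<rho> *\<^sub>R w - c) \<bullet> (a - x)" if "a \<in> F" for a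
  proof -
    have "(\<lambda>m. (\<rho> *\<^sub>R (u (Suc (r m)) + (z (Suc (r m)) - z (r m))) - c) \<bullet> (a - \<alpha> (Suc (r m))))
        \<longlonglongrightarrow> (\<rho> *\<^sub>R (w + 0) - c) \<bullet> (a - x)"
      by (intro tendsto_intros u_lim step_lim alpha_lim)
    moreover have
      "0 \<le> (\<rho> *\<^sub>R (u (Suc (r m)) + (z (Suc (r m)) - z (r m))) - c) \<bullet> (a - \<alpha> (Suc (r m)))" for m
      using alpha_vi[OF that, of "r m"] by (simp only: dual_shift)
    ultimately have "0 \<le> (\<rho> *\<^sub>R (w + 0) - c) \<bullet> (a - x)"
      by (intro LIMSEQ_le_const) blast+
    then show ?thesis
      by simp
  qed
  moreover have "(\<rho> *\<^sub>R w) \<bullet> (b - x) \<le> 0" if "b \<in> A" for b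
  proof -
    have "(\<lambda>m. ((z (Suc (r m)) - z (r m)) - \<tau> *\<^sub>R (u (Suc (r m)) + (z (Suc (r m)) - z (r m))))
              \<bullet> (b - z (Suc (r m))))
        \<longlonglongrightarrow> (0 - \<tau> *\<^sub>R (w + 0)) \<bullet> (b - x)"
      by (intro tendsto_intros u_lim step_lim z_lim)
    moreover have "0 \<le> ((z (Suc (r m)) - z (r m)) - \<tau> *\<^sub>R (u (Suc (r m)) + (z (Suc (r m)) - z (r m))))
                         \<bullet> (b - z (Suc (r m)))" for m
      using z_vi[OF that, of "r m"] unfolding dual_shift by (simp add: algebra_simps)
    ultimately have "0 \<le> (0 - \<tau> *\<^sub>R (w + 0)) \<bullet> (b - x)"
      by (intro LIMSEQ_le_const) blast+
    then show ?thesis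
      using rho_pos tau_pos by (simp add: mult_le_0_iff)
  qed
  ultimately show ?thesis
    unfolding kkt_pair_def by blast
qed

theorem tendsto_kkt_pair:
  assumes "kkt_pair F A c x\<^sub>0 y\<^sub>0"
  obtains x y where "kkt_pair F A c x y" and "z \<longlonglongrightarrow> x" and "(\<lambda>k. \<alpha> k - z k) \<longlonglongrightarrow> 0"
proof -
  have kkt\<^sub>0: "kkt_pair F A c x\<^sub>0 (\<rho> *\<^sub>R ((1/\<rho>) *\<^sub>R y\<^sub>0))"
    using assms rho_pos by simp
  note primal = primal_residual_tendsto_zero[OF kkt\<^sub>0]
  note steps = successive_differences_tendsto_zero(2)[OF kkt\<^sub>0]
  have "range (\<lambda>k. (z (Suc k), u (Suc k))) \<subseteq> range z \<times> range u"
    by auto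
  then have "bounded (range (\<lambda>k. (z (Suc k), u (Suc k))))"
    using bounded_Times[OF bounded_iterates[OF kkt\<^sub>0]] bounded_subset by blast
  then obtain l r where r: "strict_mono r" and lim: "((\<lambda>k. (z (Suc k), u (Suc k))) \<circ> r) \<longlonglongrightarrow> l"
    using bounded_imp_convergent_subsequence by blast
  define x w where "x = fst l" and "w = snd l"
  have z_lim: "(\<lambda>m. z (Suc (r m))) \<longlonglongrightarrow> x" and u_lim: "(\<lambda>m. u (Suc (r m))) \<longlonglongrightarrow> w"
    using tendsto_fst[OF lim] tendsto_snd[OF lim] by (simp_all add: x_def w_def comp_def)
  have kkt: "kkt_pair F A c x (\<rho> *\<^sub>R w)"
    by (rule cluster_point_kkt_pair[OF primal steps r z_lim u_lim])
  have "strict_mono (\<lambda>m. Suc (r m))"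
    using r by (simp add: strict_mono_def)
  moreover have "(lyapunov x w \<circ> (\<lambda>m. Suc (r m)))
      \<longlonglongrightarrow> (norm (w - w))\<^sup>2 / 2 + (norm (x - x))\<^sup>2 / (2*\<tau>)"
    unfolding lyapunov_def comp_def by (intro tendsto_intros z_lim u_lim) (use tau_pos in simp_all)
  ultimately have "lyapunov x w \<longlonglongrightarrow> 0"
    using decseq_tendsto_if_subseq_tendsto[OF decseq_lyapunov[OF kkt] lyapunov_nonneg] by simp
  then have "(\<lambda>k. z k - x) \<longlonglongrightarrow> 0"
    using tendsto_zero_if_norm_sq_le[of "2*\<tau>" "\<lambda>k. z k - x" "lyapunov x w"] norm_sq_le_lyapunov tau_pos
    by simp
  then have "z \<longlonglongrightarrow> x"
    by (simp add: LIM_zero_iff)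
  with kkt primal show ?thesis
    using that by blast
qed

end

definition row_stochastic :: "(real^'n^'m) set" where
  "row_stochastic = {x. \<forall>i. (\<Sum>j\<in>UNIV. x $ i $ j) = 1 \<and> (\<forall>j. 0 \<le> x $ i $ j)}"

definition column_sums_one :: "(real^'n^'m) set" where
  "column_sums_one = {x. \<forall>j. (\<Sum>i\<in>UNIV. x $ i $ j) = 1}"

lemma inner_matrix: "(x::real^'n^'m) \<bullet> y = (\<Sum>i\<in>UNIV. \<Sum>j\<in>UNIV. x $ i $ j * y $ i $ j)"
  by (simp add: inner_vec_def)

lemma convex_row_stochastic: "convex row_stochastic"
  unfolding convex_def row_stochastic_def
  by (auto simp: sum.distrib simp flip: sum_distrib_left)

lemma convex_column_sums_one: "convex column_sums_one"
  unfolding convex_def column_sums_one_def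
  by (auto simp: sum.distrib simp flip: sum_distrib_left)

lemma closed_row_stochastic: "closed row_stochastic"
  unfolding row_stochastic_def
  by (intro closed_Collect_all closed_Collect_conj closed_Collect_eq closed_Collect_le continuous_intros)

lemma closed_column_sums_one: "closed column_sums_one"
  unfolding column_sums_one_def
  by (intro closed_Collect_all closed_Collect_eq continuous_intros)

lemma bounded_row_stochastic: "bounded (row_stochastic :: (real^'n^'m) set)"
proof -
  have "norm x \<le> real CARD('m)" if "x \<in> row_stochastic" for x :: "real^'n^'m"
  proof -
    have "norm (x $ i) \<le> 1" for i
    proof -
      have "norm (x $ i) \<le> (\<Sum>j\<in>UNIV. \<bar>x $ i $ j\<bar>)"
        by (rule norm_le_l1_cart)
      also have "\<dots> = 1"
        using that unfolding row_stochastic_def by auto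
      finally show ?thesis .
    qed
    then have "(\<Sum>i\<in>UNIV. norm (x $ i)) \<le> real CARD('m)"
      using sum_mono[of UNIV "\<lambda>i. norm (x $ i)" "\<lambda>_. 1"] by simp
    moreover have "norm x \<le> (\<Sum>i\<in>UNIV. norm (x $ i))"
      unfolding norm_vec_def by (rule L2_set_le_sum) simp
    ultimately show ?thesis
      by linarith
  qed
  then show ?thesis
    unfolding bounded_iff by blast
qed

lemma compact_row_stochastic_column_sums_one: "compact (row_stochastic \<inter> column_sums_one)"
  unfolding compact_eq_bounded_closed
  using bounded_row_stochastic closed_row_stochastic closed_column_sums_one
  by (blast intro: bounded_Int closed_Int)

lemma uniform_matrix_mem:
  "(\<chi> i j. 1 / real CARD('n)) \<in> (row_stochastic \<inter> column_sums_one :: (real^'n^'n) set)"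
  by (simp add: row_stochastic_def column_sums_one_def)

lemma fobj_eq: "fobj W x = (if x \<in> row_stochastic then ereal (- (W \<bullet> x)) else \<infinity>)"
proof (cases "x \<in> row_stochastic")
  case True
  \<comment> \<open>the bounds x i j \<le> 1 in fi are implied by nonnegativity and unit row sums\<close>
  have "x $ i $ j \<le> 1" for i j
    using True member_le_sum[of j UNIV "\<lambda>j. x $ i $ j"] unfolding row_stochastic_def by auto
  then have "fobj W x = (\<Sum>i\<in>UNIV. ereal (- (W $ i \<bullet> x $ i)))"
    using True unfolding fobj_def fi_def row_stochastic_def by (intro sum.cong) auto
  then show ?thesis
    using True by (simp add: inner_vec_def sum_negf)
next
  case False
  then obtain i where "\<not> ((\<Sum>j\<in>UNIV. x $ i $ j) = 1 \<and> (\<forall>j. 0 \<le> x $ i $ j))"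
    unfolding row_stochastic_def by blast
  then have "fi (W $ i) (x $ i) = \<infinity>"
    unfolding fi_def by auto
  then show ?thesis
    using False unfolding fobj_def by (simp add: sum_Pinfty) blast
qed

lemma gobj_eq: "gobj x = (if x \<in> column_sums_one then 0 else \<infinity>)"
  by (simp add: gobj_def column_sums_one_def)

lemma fobj_prox_step:
  fixes W x v :: "real^'n^'n"
  assumes "0 \<le> \<rho>"
    and min: "\<And>a. fobj W x + ereal (\<rho> / 2 * (norm (x - v))\<^sup>2)
                   \<le> fobj W a + ereal (\<rho> / 2 * (norm (a - v))\<^sup>2)"
  shows "x \<in> row_stochastic"
    and "a \<in> row_stochastic \<Longrightarrow> 0 \<le> (\<rho> *\<^sub>R (x - v) - W) \<bullet> (a - x)"
proof -
  show x_mem: "x \<in> row_stochastic"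
    using min[of "\<chi> i j. 1 / real CARD('n)"] uniform_matrix_mem
    by (auto simp: fobj_eq split: if_splits)
  assume "a \<in> row_stochastic"
  have "0 \<le> (- W + \<rho> *\<^sub>R (x - v)) \<bullet> (a - x)"
  proof (rule convex_quadratic_min_imp_variational_ineq
      [OF convex_row_stochastic x_mem \<open>a \<in> row_stochastic\<close> \<open>0 \<le> \<rho>\<close>])
    show "- W \<bullet> x + \<rho> / 2 * (norm (x - v))\<^sup>2 \<le> - W \<bullet> y + \<rho> / 2 * (norm (y - v))\<^sup>2"
      if "y \<in> row_stochastic" for y
      using min[of y] x_mem that by (simp add: fobj_eq)
  qed
  then show "0 \<le> (\<rho> *\<^sub>R (x - v) - W) \<bullet> (a - x)"
    by simp
qed

lemma gobj_prox_step:
  fixes x v :: "real^'n^'n"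
  assumes "0 < r"
    and min: "\<And>b. gobj x + ereal (r / 2 * (norm (x - v))\<^sup>2) \<le> gobj b + ereal (r / 2 * (norm (b - v))\<^sup>2)"
  shows "x \<in> column_sums_one"
    and "b \<in> column_sums_one \<Longrightarrow> 0 \<le> (x - v) \<bullet> (b - x)"
proof -
  show x_mem: "x \<in> column_sums_one"
    using min[of "\<chi> i j. 1 / real CARD('n)"] uniform_matrix_mem
    by (auto simp: gobj_eq split: if_splits)
  assume "b \<in> column_sums_one"
  have "0 \<le> (0 + r *\<^sub>R (x - v)) \<bullet> (b - x)"
  proof (rule convex_quadratic_min_imp_variational_ineq
      [OF convex_column_sums_one x_mem \<open>b \<in> column_sums_one\<close>])
    show "0 \<le> r"
      using \<open>0 < r\<close> by simp
    show "0 \<bullet> x + r / 2 * (norm (x - v))\<^sup>2 \<le> 0 \<bullet> y + r / 2 * (norm (y - v))\<^sup>2"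
      if "y \<in> column_sums_one" for y
      using min[of y] x_mem that by (simp add: gobj_eq)
  qed
  then show "0 \<le> (x - v) \<bullet> (b - x)"
    using \<open>0 < r\<close> by (simp add: zero_le_mult_iff)
qed

lemma kkt_pair_minimizes_objective:
  assumes "kkt_pair row_stochastic column_sums_one W x y"
  shows "fobj W x + gobj x \<le> fobj W a + gobj a"
proof (cases "a \<in> row_stochastic \<and> a \<in> column_sums_one")
  case True
  then have "W \<bullet> a \<le> W \<bullet> x"
    using kkt_pair_maximizes[OF assms] by blast
  moreover have "x \<in> row_stochastic" "x \<in> column_sums_one"
    using assms unfolding kkt_pair_def by auto
  ultimately show ?thesis
    using True by (simp add: fobj_eq gobj_eq)
next
  case False
  then have infinite: "fobj W a + gobj a = \<infinity>"
    by (auto simp: fobj_eq gobj_eq)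
  show ?thesis
    unfolding infinite by simp
qed

lemma feasible_direction_step:
  fixes x d :: "real^'n^'m"
  assumes x: "x \<in> row_stochastic" "x \<in> column_sums_one"
    and rows: "\<And>i. (\<Sum>j\<in>UNIV. d $ i $ j) = 0" and cols: "\<And>j. (\<Sum>i\<in>UNIV. d $ i $ j) = 0"
    and active: "\<And>i j. x $ i $ j = 0 \<Longrightarrow> 0 \<le> d $ i $ j"
  obtains t where "0 < t" and "x + t *\<^sub>R d \<in> row_stochastic" and "x + t *\<^sub>R d \<in> column_sums_one"
proof -
  have "\<forall>\<^sub>F t in at_right 0. 0 \<le> x $ i $ j + t * d $ i $ j" for i j
  proof (cases "x $ i $ j = 0")
    case True
    then show ?thesis
      using active[OF True] eventually_at_right_less[of 0] by (auto elim: eventually_mono)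
  next
    case False
    then have "0 < x $ i $ j"
      using x(1) unfolding row_stochastic_def by (simp add: order_less_le)
    moreover have "((\<lambda>t. x $ i $ j + t * d $ i $ j) \<longlongrightarrow> x $ i $ j + 0 * d $ i $ j) (at_right 0)"
      by (intro tendsto_intros)
    ultimately have "\<forall>\<^sub>F t in at_right 0. 0 < x $ i $ j + t * d $ i $ j"
      by (intro order_tendstoD(1)) auto
    then show ?thesis
      by (auto elim: eventually_mono)
  qed
  then have "\<forall>\<^sub>F t in at_right (0::real). 0 < t \<and> (\<forall>i j. 0 \<le> x $ i $ j + t * d $ i $ j)"
    by (intro eventually_conj eventually_at_right_less eventually_all_finite)
  then obtain t :: real where t: "0 < t" "\<And>i j. 0 \<le> x $ i $ j + t * d $ i $ j"
    using eventually_happens'[OF trivial_limit_at_right_real] by blast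
  show ?thesis
  proof (rule that[OF \<open>0 < t\<close>])
    show "x + t *\<^sub>R d \<in> row_stochastic"
      using x(1) rows t(2) unfolding row_stochastic_def by (simp add: sum.distrib flip: sum_distrib_left)
    show "x + t *\<^sub>R d \<in> column_sums_one"
      using x(2) cols unfolding column_sums_one_def by (simp add: sum.distrib flip: sum_distrib_left)
  qed
qed

(* Lagrange multipliers l, m for the row and column constraints and v for the sign constraints,
   with complementary slackness at x. *)
definition multiplier_cone :: "real^'n^'m \<Rightarrow> (real^'n^'m) set" where
  "multiplier_cone x = {W. \<exists>(l::real^'m) (m::real^'n) (v::real^'n^'m).
     \<forall>i j. 0 \<le> v $ i $ j \<and> x $ i $ j * v $ i $ j = 0 \<and> W $ i $ j = l $ i + m $ j - v $ i $ j}"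

lemma convex_cone_multiplier_cone: "convex_cone (multiplier_cone x)"
  unfolding convex_cone_iff
proof (intro conjI ballI allI impI)
  show "0 \<in> multiplier_cone x"
    unfolding multiplier_cone_def by (intro CollectI exI[of _ 0]) simp
next
  fix W W' assume "W \<in> multiplier_cone x" "W' \<in> multiplier_cone x"
  then obtain l m v l' m' v' where
    v: "\<And>i j. 0 \<le> v $ i $ j" "\<And>i j. x $ i $ j * v $ i $ j = 0" "\<And>i j. W $ i $ j = l $ i + m $ j - v $ i $ j"
    and v': "\<And>i j. 0 \<le> v' $ i $ j" "\<And>i j. x $ i $ j * v' $ i $ j = 0"
      "\<And>i j. W' $ i $ j = l' $ i + m' $ j - v' $ i $ j"
    unfolding multiplier_cone_def by blast
  show "W + W' \<in> multiplier_cone x"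
    unfolding multiplier_cone_def
    by (intro CollectI exI[of _ "l + l'"] exI[of _ "m + m'"] exI[of _ "v + v'"])
      (simp add: distrib_left v v' add_nonneg_nonneg)
next
  fix W and c :: real assume "W \<in> multiplier_cone x" "0 \<le> c"
  then obtain l m v where
    v: "\<And>i j. 0 \<le> v $ i $ j" "\<And>i j. x $ i $ j * v $ i $ j = 0" "\<And>i j. W $ i $ j = l $ i + m $ j - v $ i $ j"
    unfolding multiplier_cone_def by blast
  have cv: "x $ i $ j * (c * v $ i $ j) = 0" for i j
    using v(2)[of i j] by (simp add: mult.left_commute)
  show "c *\<^sub>R W \<in> multiplier_cone x"
    unfolding multiplier_cone_def
    by (intro CollectI exI[of _ "c *\<^sub>R l"] exI[of _ "c *\<^sub>R m"] exI[of _ "c *\<^sub>R v"])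
      (simp add: v cv \<open>0 \<le> c\<close> distrib_left right_diff_distrib)
qed

lemma maximizer_in_multiplier_cone:
  fixes W x :: "real^'n^'m"
  assumes x: "x \<in> row_stochastic" "x \<in> column_sums_one"
    and max: "\<And>y. y \<in> row_stochastic \<Longrightarrow> y \<in> column_sums_one \<Longrightarrow> W \<bullet> y \<le> W \<bullet> x"
  shows "W \<in> multiplier_cone x"
proof (rule ccontr)
  define row :: "'m \<Rightarrow> real^'n^'m" where "row i = axis i 1" for i
  define col :: "'n \<Rightarrow> real^'n^'m" where "col j = (\<chi> r. axis j 1)" for j
  define entry :: "'m \<Rightarrow> 'n \<Rightarrow> real^'n^'m" where "entry i j = axis i (axis j 1)" for i j
  define G where "G = range row \<union> range (\<lambda>i. - row i) \<union> range col \<union> range (\<lambda>j. - col j)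
    \<union> {- entry i j | i j. x $ i $ j = 0}"
  have "row i \<in> multiplier_cone x" "- row i \<in> multiplier_cone x" for i
    unfolding multiplier_cone_def row_def
    by (intro CollectI exI[of _ "axis i 1"] exI[of _ "- axis i 1"] exI[of _ 0]; simp add: axis_def)+
  moreover have "col j \<in> multiplier_cone x" "- col j \<in> multiplier_cone x" for j
    unfolding multiplier_cone_def col_def
    by (intro CollectI exI[of _ 0] exI[of _ "axis j 1"] exI[of _ "- axis j 1"]; simp add: axis_def)+
  moreover have "- entry i j \<in> multiplier_cone x" if "x $ i $ j = 0" for i j
    unfolding multiplier_cone_def entry_def
    by (intro CollectI exI[of _ 0] exI[of _ "entry i j"]) (simp add: entry_def axis_def that)
  ultimately have "G \<subseteq> multiplier_cone x"
    unfolding G_def by blast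
  then have "convex_cone hull G \<subseteq> multiplier_cone x"
    by (rule hull_minimal) (rule convex_cone_multiplier_cone)
  moreover have "{- entry i j | i j. x $ i $ j = 0} \<subseteq> range (\<lambda>(i, j). - entry i j)"
    by auto
  then have "finite {- entry i j | i j. x $ i $ j = 0}"
    by (rule finite_subset) simp
  then have "finite G"
    unfolding G_def by simp
  moreover assume "W \<notin> multiplier_cone x"
  ultimately obtain d where "W \<bullet> d > 0" and d: "\<And>g. g \<in> G \<Longrightarrow> g \<bullet> d \<le> 0"
    using farkas_convex_cone_hull[of G W] by blast
  have row_G: "row i \<in> G" "- row i \<in> G" for i
    unfolding G_def by auto
  have col_G: "col j \<in> G" "- col j \<in> G" for j
    unfolding G_def by auto
  have rows: "(\<Sum>j\<in>UNIV. d $ i $ j) = 0" for i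
  proof -
    have "row i \<bullet> d = (\<Sum>j\<in>UNIV. d $ i $ j)"
      unfolding row_def inner_axis' by (simp add: inner_vec_def)
    then show ?thesis
      using d[OF row_G(1)[of i]] d[OF row_G(2)[of i]] by (simp add: inner_minus_left)
  qed
  have cols: "(\<Sum>i\<in>UNIV. d $ i $ j) = 0" for j
  proof -
    have "col j \<bullet> d = (\<Sum>i\<in>UNIV. d $ i $ j)"
      unfolding col_def by (simp add: inner_vec_def[of "\<chi> r. axis j 1"] inner_axis')
    then show ?thesis
      using d[OF col_G(1)[of j]] d[OF col_G(2)[of j]] by (simp add: inner_minus_left)
  qed
  have active: "0 \<le> d $ i $ j" if "x $ i $ j = 0" for i j
  proof -
    have "- entry i j \<in> G"
      unfolding G_def using that by auto
    then show ?thesis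
      using d unfolding entry_def by (fastforce simp: inner_minus_left inner_axis')
  qed
  obtain t where "0 < t" "x + t *\<^sub>R d \<in> row_stochastic" "x + t *\<^sub>R d \<in> column_sums_one"
    using feasible_direction_step[OF x rows cols active] .
  then have "W \<bullet> (x + t *\<^sub>R d) \<le> W \<bullet> x"
    by (intro max)
  then show False
    using mult_pos_pos[OF \<open>0 < t\<close> \<open>W \<bullet> d > 0\<close>] by (simp add: inner_add_right)
qed

lemma multiplier_cone_imp_kkt_pair:
  fixes W x :: "real^'n^'m"
  assumes x: "x \<in> row_stochastic" "x \<in> column_sums_one" and "W \<in> multiplier_cone x"
  obtains y where "kkt_pair row_stochastic column_sums_one W x y"
proof -
  obtain l m v where v: "\<And>i j. 0 \<le> v $ i $ j" "\<And>i j. x $ i $ j * v $ i $ j = 0"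
    and W: "\<And>i j. W $ i $ j = l $ i + m $ j - v $ i $ j"
    using \<open>W \<in> multiplier_cone x\<close> unfolding multiplier_cone_def by blast
  define y :: "real^'n^'m" where "y = (\<chi> i j. m $ j)"
  have "0 \<le> (y - W) \<bullet> (a - x)" if a: "a \<in> row_stochastic" for a
  proof -
    have "(y - W) $ i $ j * (a - x) $ i $ j = v $ i $ j * a $ i $ j - l $ i * a $ i $ j + l $ i * x $ i $ j"
      for i j
      using v(2)[of i j] by (simp add: y_def W algebra_simps)
    then have "(y - W) \<bullet> (a - x) = (\<Sum>i\<in>UNIV. (\<Sum>j\<in>UNIV. v $ i $ j * a $ i $ j)
        - l $ i * (\<Sum>j\<in>UNIV. a $ i $ j) + l $ i * (\<Sum>j\<in>UNIV. x $ i $ j))"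
      by (simp add: inner_matrix sum.distrib sum_subtractf sum_distrib_left)
    also have "\<dots> = (\<Sum>i\<in>UNIV. \<Sum>j\<in>UNIV. v $ i $ j * a $ i $ j)"
      using a x(1) unfolding row_stochastic_def by simp
    also have "\<dots> \<ge> 0"
      using a v(1) unfolding row_stochastic_def by (intro sum_nonneg mult_nonneg_nonneg) auto
    finally show ?thesis .
  qed
  moreover have "y \<bullet> (b - x) = 0" if b: "b \<in> column_sums_one" for b
  proof -
    have "y \<bullet> (b - x) = (\<Sum>j\<in>UNIV. m $ j * ((\<Sum>i\<in>UNIV. b $ i $ j) - (\<Sum>i\<in>UNIV. x $ i $ j)))"
      unfolding inner_matrix y_def
      by (subst sum.swap) (simp add: sum_subtractf sum_distrib_left right_diff_distrib)
    also have "\<dots> = 0"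
      using b x(2) unfolding column_sums_one_def by simp
    finally show ?thesis .
  qed
  ultimately show ?thesis
    using that[of y] x unfolding kkt_pair_def by auto
qed

lemma kkt_pair_exists:
  obtains x y where "kkt_pair row_stochastic column_sums_one (W::real^'n^'n) x y"
proof -
  have "continuous_on (row_stochastic \<inter> column_sums_one) (\<lambda>x. W \<bullet> x)"
    by (intro continuous_intros)
  then obtain x where x: "x \<in> row_stochastic \<inter> column_sums_one"
    and max: "\<And>y. y \<in> row_stochastic \<inter> column_sums_one \<Longrightarrow> W \<bullet> y \<le> W \<bullet> x"
    using continuous_attains_sup[OF compact_row_stochastic_column_sums_one] uniform_matrix_mem by blast
  then have "W \<in> multiplier_cone x"
    by (intro maximizer_in_multiplier_cone) auto
  then show ?thesis
    using x that multiplier_cone_imp_kkt_pair by blast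
qed

theorem mainTheorem5:
  fixes W :: "real^'n^'n" and \<rho> \<tau> :: real
    and \<alpha> z u :: "nat \<Rightarrow> real^'n^'n"
  assumes rho: "\<rho> > 0"
    and tau: "0 < \<tau>" "\<tau> < 1"
    and alpha_step: "\<And>k a. fobj W (\<alpha> (Suc k)) + ereal (\<rho> / 2 * (norm (\<alpha> (Suc k) - z k + u k))\<^sup>2)
                        \<le> fobj W a + ereal (\<rho> / 2 * (norm (a - z k + u k))\<^sup>2)"
    and z_step: "\<And>k b. gobj (z (Suc k)) + ereal (\<rho> / (2 * \<tau>) *
                         (norm (z (Suc k) - (z k + \<tau> *\<^sub>R (\<alpha> (Suc k) - z k + u k))))\<^sup>2)
                    \<le> gobj b + ereal (\<rho> / (2 * \<tau>) *
                         (norm (b - (z k + \<tau> *\<^sub>R (\<alpha> (Suc k) - z k + u k))))\<^sup>2)"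
    and u_step: "\<And>k. u (Suc k) = u k + \<alpha> (Suc k) - z (Suc k)"
  shows "\<exists>zs. z \<longlonglongrightarrow> zs
            \<and> (\<forall>a b. a = b \<longrightarrow> fobj W zs + gobj zs \<le> fobj W a + gobj b)
            \<and> (\<lambda>k. \<alpha> k - z k) \<longlonglongrightarrow> 0"
proof -
  have shift: "b - z k + u k = b - (z k - u k)" "\<rho> / (2 * \<tau>) = \<rho> / \<tau> / 2" for b k
    by (simp_all add: algebra_simps)
  note alpha_prox = fobj_prox_step[OF less_imp_le[OF rho] alpha_step[unfolded shift]]
  note z_prox = gobj_prox_step[of "\<rho> / \<tau>", OF _ z_step[unfolded shift]]
  interpret linearized_admm row_stochastic column_sums_one W \<rho> \<tau> \<alpha> z u
    using rho tau alpha_prox z_prox u_step closed_row_stochastic closed_column_sums_one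
    by unfold_locales (simp_all add: shift)
  obtain x\<^sub>0 y\<^sub>0 where "kkt_pair row_stochastic column_sums_one W x\<^sub>0 y\<^sub>0"
    by (rule kkt_pair_exists)
  then obtain zs ys where "kkt_pair row_stochastic column_sums_one W zs ys"
    and "z \<longlonglongrightarrow> zs" and "(\<lambda>k. \<alpha> k - z k) \<longlonglongrightarrow> 0"
    by (rule tendsto_kkt_pair)
  then show ?thesis
    using kkt_pair_minimizes_objective by blast
qed

end
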